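(* There exist a uniquely $4$-colourable plane triangulation $G'$, a set $\mathcal F$ of $24$ faces of $G'$, and a bijection $F\mapsto\phi_F$ between $\mathcal F$ and the $24$ proper colourings $V(G')\to\{1,2,3,4\}$ of $G'$, such that for every $F\in\mathcal F$, $\phi_F(V(F))=\{1,2,3\}$, where $V(F)$ is the set of vertices incident to $F$.
   Context: A graph is uniquely $4$-colourable if there is a unique partition of its vertex set into $4$ independent sets; such a graph has exactly $24$ proper colourings with colour set $\{1,2,3,4\}$. *)

theory Defs
  imports Main "HOL-Library.FuncSet" "HOL-Library.Disjoint_Sets"
begin

text \<open>A plane triangulation is described combinatorially as a triangulated 2-sphere:
  a finite set V of vertices and a set T of faces (each a 3-element set of vertices).\<close>

definition tri_edges :: "'a set set \<Rightarrow> 'a set set" where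
  "tri_edges T = {e. card e = 2 \<and> (\<exists>t\<in>T. e \<subseteq> t)}"

definition vertex_link :: "'a set set \<Rightarrow> 'a \<Rightarrow> 'a set set" where
  "vertex_link T v = {t - {v} | t. t \<in> T \<and> v \<in> t}"

definition edge_rel :: "'a set set \<Rightarrow> ('a \<times> 'a) set" where
  "edge_rel E = {(x, y). {x, y} \<in> E}"

definition plane_triangulation :: "'a set \<Rightarrow> 'a set set \<Rightarrow> bool" where
  "plane_triangulation V T \<longleftrightarrow>
     finite V \<and> V \<noteq> {} \<and>
     (\<forall>t\<in>T. t \<subseteq> V \<and> card t = 3) \<and>
     (\<forall>v\<in>V. \<exists>t\<in>T. v \<in> t) \<and>
     \<comment> \<open>every edge lies in exactly two faces\<close>
     (\<forall>e\<in>tri_edges T. card {t\<in>T. e \<subseteq> t} = 2) \<and>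
     \<comment> \<open>the link of every vertex is a single cycle (it is 2-regular by the previous clause)\<close>
     (\<forall>v\<in>V. \<forall>x\<in>\<Union>(vertex_link T v). \<forall>y\<in>\<Union>(vertex_link T v).
        (x, y) \<in> (edge_rel (vertex_link T v))\<^sup>*) \<and>
     \<comment> \<open>connected\<close>
     (\<forall>x\<in>V. \<forall>y\<in>V. (x, y) \<in> (edge_rel (tri_edges T))\<^sup>*) \<and>
     \<comment> \<open>Euler characteristic 2 (sphere)\<close>
     int (card V) - int (card (tri_edges T)) + int (card T) = 2"

definition independent_set :: "'a set set \<Rightarrow> 'a set \<Rightarrow> bool" where
  "independent_set E S \<longleftrightarrow> (\<forall>x\<in>S. \<forall>y\<in>S. {x, y} \<notin> E)"

definition proper_colourings :: "'a set \<Rightarrow> 'a set set \<Rightarrow> nat \<Rightarrow> ('a \<Rightarrow> nat) set" where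
  "proper_colourings V E k =
     {\<phi> \<in> V \<rightarrow>\<^sub>E {1..k}. \<forall>x\<in>V. \<forall>y\<in>V. {x, y} \<in> E \<longrightarrow> \<phi> x \<noteq> \<phi> y}"

definition uniquely_colourable :: "'a set \<Rightarrow> 'a set set \<Rightarrow> nat \<Rightarrow> bool" where
  "uniquely_colourable V E k \<longleftrightarrow>
     (\<exists>!P. partition_on V P \<and> card P = k \<and> (\<forall>S\<in>P. independent_set E S))"

end

theory Submission
  imports Defs "HOL-Combinatorics.Multiset_Permutations"
begin

text \<open>
  G' is a stacked triangulation: starting from K4 on 0, 1, 2, 3, each further vertex v is
  inserted into a face whose corners lie in the three residue classes mod 4 other than that of v.
  The colour of an inserted vertex is forced to be the one missing on its three neighbours, so
  every proper 4-colouring is constant on the residue classes: G' is uniquely 4-colourable and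
  its 24 colourings correspond to the orderings of the four colours on the classes. Every face
  meets exactly three classes, and among the chosen 24 faces each class is missed by exactly six;
  so the six colourings giving colour 4 to a class can be matched with the six faces missing it,
  and each such colouring uses exactly 1, 2, 3 on its face.
\<close>

section \<open>Residue-stacked graphs and their colourings\<close>

definition residue_stacked :: "nat \<Rightarrow> nat set \<Rightarrow> nat set set \<Rightarrow> bool" where
  "residue_stacked k V E \<longleftrightarrow> 0 < k \<and> {..<k} \<subseteq> V \<and>
     (\<forall>i\<in>{..<k}. \<forall>j\<in>{..<k}. i \<noteq> j \<longrightarrow> {i, j} \<in> E) \<and>
     (\<forall>x y. {x, y} \<in> E \<longrightarrow> x mod k \<noteq> y mod k) \<and>
     (\<forall>v\<in>V. k \<le> v \<longrightarrow>
        (\<forall>r\<in>{..<k} - {v mod k}. \<exists>u\<in>V. u < v \<and> u mod k = r \<and> {u, v} \<in> E))"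

definition residue_colouring :: "nat \<Rightarrow> nat set \<Rightarrow> nat list \<Rightarrow> nat \<Rightarrow> nat" where
  "residue_colouring k V p = (\<lambda>v\<in>V. p ! (v mod k))"

lemma residue_stacked_colour_eq_mod:
  assumes G: "residue_stacked k V E"
    and proper: "\<And>x y. x \<in> V \<Longrightarrow> y \<in> V \<Longrightarrow> {x, y} \<in> E \<Longrightarrow> f x \<noteq> f y"
    and range: "f ` V \<subseteq> f ` {..<k}"
    and "v \<in> V"
  shows "f v = f (v mod k)"
  using \<open>v \<in> V\<close>
proof (induction v rule: less_induct)
  case (less v)
  show ?case
  proof (cases "v < k")
    case False
    obtain j where j: "j < k" "f v = f j"
      using range less.prems by auto
    have "j = v mod k"
    proof (rule ccontr)
      assume "j \<noteq> v mod k"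
      then have "\<exists>u\<in>V. u < v \<and> u mod k = j \<and> {u, v} \<in> E"
        using G False less.prems j(1) unfolding residue_stacked_def by (simp add: not_less)
      then obtain u where u: "u \<in> V" "u < v" "u mod k = j" "{u, v} \<in> E"
        by blast
      then have "f u = f j"
        using less.IH by simp
      then show False
        using proper[OF u(1) less.prems u(4)] j(2) by simp
    qed
    then show ?thesis
      using j(2) by simp
  qed simp
qed

lemma residue_stacked_inj_on_base:
  assumes G: "residue_stacked k V E"
    and proper: "\<And>x y. x \<in> V \<Longrightarrow> y \<in> V \<Longrightarrow> {x, y} \<in> E \<Longrightarrow> f x \<noteq> f y"
  shows "inj_on f {..<k}"
proof (rule inj_onI, rule ccontr)
  fix i j assume "i \<in> {..<k}" "j \<in> {..<k}" "f i = f j" "i \<noteq> j"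
  then show False
    using G proper[of i j] unfolding residue_stacked_def by auto
qed

lemma residue_colouring_in_proper_colourings:
  assumes G: "residue_stacked k V E" and p: "p \<in> permutations_of_set {1..k}"
  shows "residue_colouring k V p \<in> proper_colourings V E k"
proof -
  have len: "length p = k" and set: "set p = {1..k}" and dist: "distinct p"
    using p length_finite_permutations_of_set permutations_of_setD by fastforce+
  have "0 < k" "\<And>x y. {x, y} \<in> E \<Longrightarrow> x mod k \<noteq> y mod k"
    using G unfolding residue_stacked_def by auto
  then show ?thesis
    using len set dist unfolding proper_colourings_def residue_colouring_def
    by (auto simp: nth_eq_iff_index_eq simp flip: set)
qed

lemma proper_colouring_eq_residue_colouring:
  assumes G: "residue_stacked k V E" and \<phi>: "\<phi> \<in> proper_colourings V E k"
  shows "\<phi> = residue_colouring k V (map \<phi> [0..<k])"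
    and "map \<phi> [0..<k] \<in> permutations_of_set {1..k}"
proof -
  have k: "0 < k" "{..<k} \<subseteq> V"
    using G unfolding residue_stacked_def by auto
  have \<phi>V: "\<phi> \<in> V \<rightarrow>\<^sub>E {1..k}"
    and proper: "\<And>x y. x \<in> V \<Longrightarrow> y \<in> V \<Longrightarrow> {x, y} \<in> E \<Longrightarrow> \<phi> x \<noteq> \<phi> y"
    using \<phi> unfolding proper_colourings_def by auto
  have inj: "inj_on \<phi> {..<k}"
    using residue_stacked_inj_on_base[OF G proper] .
  have "\<phi> ` {..<k} = {1..k}"
    using \<phi>V k(2) card_image[OF inj] by (intro card_subset_eq) auto
  then have forced: "\<phi> v = \<phi> (v mod k)" if "v \<in> V" for v
    using residue_stacked_colour_eq_mod[where f = \<phi>, OF G proper _ that] \<phi>V by auto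
  show "map \<phi> [0..<k] \<in> permutations_of_set {1..k}"
  proof (rule permutations_of_setI)
    show "set (map \<phi> [0..<k]) = {1..k}"
      using \<open>\<phi> ` {..<k} = {1..k}\<close> by (simp add: atLeast0LessThan)
    show "distinct (map \<phi> [0..<k])"
      using inj by (simp add: distinct_map atLeast0LessThan)
  qed
  show "\<phi> = residue_colouring k V (map \<phi> [0..<k])"
  proof
    fix v
    show "\<phi> v = residue_colouring k V (map \<phi> [0..<k]) v"
      using forced k(1) PiE_arb[OF \<phi>V] by (cases "v \<in> V") (simp_all add: residue_colouring_def)
  qed
qed

lemma proper_colourings_residue_stacked:
  assumes "residue_stacked k V E"
  shows "proper_colourings V E k = residue_colouring k V ` permutations_of_set {1..k}"
  using residue_colouring_in_proper_colourings[OF assms] proper_colouring_eq_residue_colouring[OF assms]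
  by blast

lemma inj_on_residue_colouring:
  assumes "{..<k} \<subseteq> V"
  shows "inj_on (residue_colouring k V) (permutations_of_set {1..k})"
proof (rule inj_onI)
  fix p q
  assume p: "p \<in> permutations_of_set {1..k}" and q: "q \<in> permutations_of_set {1..k}"
    and eq: "residue_colouring k V p = residue_colouring k V q"
  have "p ! i = q ! i" if "i < k" for i
    using fun_cong[OF eq, of i] assms that by (auto simp: residue_colouring_def)
  moreover have "length p = k" "length q = k"
    using p q length_finite_permutations_of_set by fastforce+
  ultimately show "p = q"
    by (simp add: nth_equalityI)
qed

lemma bij_betw_residue_colouring:
  assumes "residue_stacked k V E"
  shows "bij_betw (residue_colouring k V) (permutations_of_set {1..k}) (proper_colourings V E k)"
proof -
  have "{..<k} \<subseteq> V"
    using assms unfolding residue_stacked_def by blast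
  then show ?thesis
    unfolding bij_betw_def proper_colourings_residue_stacked[OF assms]
    using inj_on_residue_colouring by blast
qed

lemma image_residue_colouring:
  assumes p: "p \<in> permutations_of_set {1..k}" and "F \<subseteq> V"
    and F: "(\<lambda>v. v mod k) ` F = {..<k} - {c}" and "c < k"
  shows "residue_colouring k V p ` F = {1..k} - {p ! c}"
proof -
  have len: "length p = k" and set: "set p = {1..k}" and dist: "distinct p"
    using p length_finite_permutations_of_set permutations_of_setD by fastforce+
  have "residue_colouring k V p ` F = (!) p ` ((\<lambda>v. v mod k) ` F)"
    using \<open>F \<subseteq> V\<close> by (auto simp: residue_colouring_def image_image)
  also have "\<dots> = (!) p ` {..<k} - {p ! c}"
    unfolding F using \<open>c < k\<close> inj_on_nth[OF dist, of "{..<k}"] len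
    by (subst inj_on_image_set_diff) auto
  also have "(!) p ` {..<k} = set p"
    using len by (auto simp: in_set_conv_nth)
  finally show ?thesis
    using set by simp
qed

definition residue_classes :: "nat \<Rightarrow> nat set \<Rightarrow> nat set set" where
  "residue_classes k V = (\<lambda>i. {v \<in> V. v mod k = i}) ` {..<k}"

lemma residue_classes_partition:
  assumes "residue_stacked k V E"
  shows "partition_on V (residue_classes k V) \<and> card (residue_classes k V) = k \<and>
    (\<forall>S\<in>residue_classes k V. independent_set E S)"
proof -
  have k: "0 < k" "{..<k} \<subseteq> V" and E: "\<And>x y. {x, y} \<in> E \<Longrightarrow> x mod k \<noteq> y mod k"
    using assms unfolding residue_stacked_def by auto
  have self: "i \<in> {v \<in> V. v mod k = i}" if "i < k" for i
    using k(2) that by auto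
  have "\<Union>(residue_classes k V) = V"
    using k(1) by (auto simp: residue_classes_def)
  moreover have "{} \<notin> residue_classes k V"
    using self unfolding residue_classes_def by blast
  ultimately have "partition_on V (residue_classes k V)"
    by (intro partition_onI) (auto simp: residue_classes_def disjnt_def)
  moreover have "inj_on (\<lambda>i. {v \<in> V. v mod k = i}) {..<k}"
  proof (rule inj_onI)
    fix i j assume "i \<in> {..<k}" "{v \<in> V. v mod k = i} = {v \<in> V. v mod k = j}"
    then show "i = j"
      using self[of i] by auto
  qed
  moreover have "\<forall>S\<in>residue_classes k V. independent_set E S"
    unfolding residue_classes_def independent_set_def by (auto dest: E)
  ultimately show ?thesis
    by (simp add: residue_classes_def card_image)
qed

lemma partition_on_block:
  assumes "partition_on V P"
  obtains block where "\<And>v. v \<in> V \<Longrightarrow> block v \<in> P" "\<And>v. v \<in> V \<Longrightarrow> v \<in> block v"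
    and "\<And>S v. S \<in> P \<Longrightarrow> v \<in> S \<Longrightarrow> block v = S"
proof -
  have unique: "\<exists>!S. S \<in> P \<and> v \<in> S" if "v \<in> V" for v
    using assms that unfolding partition_on_def disjoint_def by blast
  define block where "block v = (THE S. S \<in> P \<and> v \<in> S)" for v
  show thesis
  proof (rule that)
    show "block v \<in> P" "v \<in> block v" if "v \<in> V" for v
      using theI'[OF unique[OF that]] unfolding block_def by auto
    show "block v = S" if "S \<in> P" "v \<in> S" for S v
    proof -
      have "v \<in> V"
        using assms that unfolding partition_on_def by blast
      then show ?thesis
        unfolding block_def using the1_equality[OF unique] that by blast
    qed
  qed
qed

lemma partition_eq_residue_classes:
  assumes G: "residue_stacked k V E" and P: "partition_on V P" "card P = k"
    and indep: "\<forall>S\<in>P. independent_set E S"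
  shows "P = residue_classes k V"
proof -
  have k: "0 < k" "{..<k} \<subseteq> V"
    using G unfolding residue_stacked_def by auto
  obtain block where block: "\<And>v. v \<in> V \<Longrightarrow> block v \<in> P" "\<And>v. v \<in> V \<Longrightarrow> v \<in> block v"
    and block_eq: "\<And>S v. S \<in> P \<Longrightarrow> v \<in> S \<Longrightarrow> block v = S"
    by (fact partition_on_block[OF P(1)])
  have proper: "block x \<noteq> block y" if "x \<in> V" "y \<in> V" "{x, y} \<in> E" for x y
  proof
    assume "block x = block y"
    then have "x \<in> block x" "y \<in> block x" "block x \<in> P"
      using block that by auto
    then show False
      using indep that(3) unfolding independent_set_def by blast
  qed
  have inj: "inj_on block {..<k}"
    using residue_stacked_inj_on_base[OF G proper] .
  have "finite P"
    using P(2) k(1) card.infinite by force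
  moreover have "block ` {..<k} \<subseteq> P"
    using block k(2) by auto
  ultimately have P_eq: "block ` {..<k} = P"
    using card_image[OF inj] P(2) by (intro card_subset_eq) auto
  have forced: "block v = block (v mod k)" if "v \<in> V" for v
    using residue_stacked_colour_eq_mod[where f = block, OF G proper _ that] block(1) by (auto simp: P_eq)
  have "block i = {v \<in> V. v mod k = i}" if "i < k" for i
  proof (intro set_eqI iffI)
    fix v assume "v \<in> block i"
    moreover have "block i \<in> P"
      using block(1) k(2) that by auto
    ultimately have "v \<in> V" "block v = block i"
      using P(1) block_eq unfolding partition_on_def by auto
    then show "v \<in> {v \<in> V. v mod k = i}"
      using forced inj_onD[OF inj] that k(1) by fastforce
  next
    fix v assume "v \<in> {v \<in> V. v mod k = i}"
    then show "v \<in> block i"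
      using forced block(2) by auto
  qed
  then show ?thesis
    unfolding residue_classes_def P_eq[symmetric] by simp
qed

lemma uniquely_colourable_residue_stacked:
  assumes "residue_stacked k V E"
  shows "uniquely_colourable V E k"
  unfolding uniquely_colourable_def
  using residue_classes_partition[OF assms] partition_eq_residue_classes[OF assms] by blast

section \<open>Permutations with a prescribed entry\<close>

lemma insert_nth_permutations_of_set:
  assumes q: "q \<in> permutations_of_set (A - {a})" and "a \<in> A"
  shows "take c q @ a # drop c q \<in> permutations_of_set A"
proof -
  have "set q = A - {a}" "distinct q"
    using permutations_of_setD[OF q] by auto
  then show ?thesis
    using \<open>a \<in> A\<close> set_take_disj_set_drop_if_distinct[of q c c]
    by (auto simp: permutations_of_set_def dest: in_set_takeD in_set_dropD
        simp flip: set_append[of "take c q" "drop c q"])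
qed

lemma delete_nth_permutations_of_set:
  assumes p: "p \<in> permutations_of_set A" and "c < length p"
  shows "take c p @ drop (Suc c) p \<in> permutations_of_set (A - {p ! c})"
proof -
  have "p = take c p @ p ! c # drop (Suc c) p"
    using id_take_nth_drop \<open>c < length p\<close> by blast
  then have "distinct (take c p @ p ! c # drop (Suc c) p)" "set (take c p @ p ! c # drop (Suc c) p) = A"
    using permutations_of_setD[OF p] by simp_all
  then show ?thesis
    by (auto simp: permutations_of_set_def)
qed

lemma bij_betw_insert_nth_permutations_of_set:
  assumes "finite A" "a \<in> A" "c < card A"
  shows "bij_betw (\<lambda>q. take c q @ a # drop c q) (permutations_of_set (A - {a}))
    {p \<in> permutations_of_set A. p ! c = a}"
proof (rule bij_betw_byWitness[where f' = "\<lambda>p. take c p @ drop (Suc c) p"])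
  have len: "length q = card A - 1" if "q \<in> permutations_of_set (A - {a})" for q
    using length_finite_permutations_of_set[OF that] assms by simp
  have len': "c < length p" if "p \<in> permutations_of_set A" for p
    using length_finite_permutations_of_set[OF that] assms by simp
  show "\<forall>q\<in>permutations_of_set (A - {a}).
      take c (take c q @ a # drop c q) @ drop (Suc c) (take c q @ a # drop c q) = q"
    using len assms(3) by simp
  show "\<forall>p\<in>{p \<in> permutations_of_set A. p ! c = a}.
      take c (take c p @ drop (Suc c) p) @ a # drop c (take c p @ drop (Suc c) p) = p"
    using len' id_take_nth_drop by (fastforce simp: min_def)
  show "(\<lambda>q. take c q @ a # drop c q) ` permutations_of_set (A - {a}) \<subseteq>
      {p \<in> permutations_of_set A. p ! c = a}"
    using insert_nth_permutations_of_set[OF _ assms(2)] len assms(3)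
    by (auto simp: nth_append)
  show "(\<lambda>p. take c p @ drop (Suc c) p) ` {p \<in> permutations_of_set A. p ! c = a} \<subseteq>
      permutations_of_set (A - {a})"
    using delete_nth_permutations_of_set len' by blast
qed

lemma card_permutations_of_set_nth_eq:
  assumes "finite A" "a \<in> A" "c < card A"
  shows "card {p \<in> permutations_of_set A. p ! c = a} = fact (card A - 1)"
  using bij_betw_same_card[OF bij_betw_insert_nth_permutations_of_set[OF assms]] assms
  by (simp add: card_Diff_singleton)

lemma UN_permutations_of_set_nth_eq:
  assumes "finite A" "a \<in> A"
  shows "(\<Union>c<card A. {p \<in> permutations_of_set A. p ! c = a}) = permutations_of_set A"
proof -
  have "\<exists>c<card A. p ! c = a" if "p \<in> permutations_of_set A" for p
    using permutations_of_setD[OF that] length_finite_permutations_of_set[OF that] assms(2)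
    by (metis in_set_conv_nth)
  then show ?thesis
    by blast
qed

lemma disjoint_family_on_permutations_of_set_nth_eq:
  "disjoint_family_on (\<lambda>c. {p \<in> permutations_of_set A. p ! c = a}) {..<card A}"
  unfolding disjoint_family_on_def
proof (intro ballI impI equals0I)
  fix c d p assume "c \<in> {..<card A}" "d \<in> {..<card A}" "c \<noteq> d"
    and "p \<in> {p \<in> permutations_of_set A. p ! c = a} \<inter> {p \<in> permutations_of_set A. p ! d = a}"
  then show False
    using length_finite_permutations_of_set permutations_of_setD(2) nth_eq_iff_index_eq
    by (metis (mono_tags, lifting) IntD1 IntD2 lessThan_iff mem_Collect_eq)
qed

lemma bij_betw_disjoint_families:
  assumes "disjoint_family_on A I" "disjoint_family_on B I"
    and "\<And>i. i \<in> I \<Longrightarrow> finite (A i)" "\<And>i. i \<in> I \<Longrightarrow> finite (B i)"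
    and "\<And>i. i \<in> I \<Longrightarrow> card (A i) = card (B i)"
  shows "\<exists>f. bij_betw f (\<Union>i\<in>I. A i) (\<Union>i\<in>I. B i) \<and> (\<forall>i\<in>I. f ` A i = B i)"
proof -
  have "\<forall>i\<in>I. \<exists>h. bij_betw h (A i) (B i)"
    using assms(3-5) finite_same_card_bij by blast
  then obtain g where g: "\<And>i. i \<in> I \<Longrightarrow> bij_betw (g i) (A i) (B i)"
    by metis
  define f where "f x = g (SOME i. i \<in> I \<and> x \<in> A i) x" for x
  have "bij_betw f (A i) (B i)" if "i \<in> I" for i
  proof (rule bij_betw_cong[THEN iffD1, OF _ g[OF that]])
    fix x assume "x \<in> A i"
    then have "(SOME j. j \<in> I \<and> x \<in> A j) = i"
      using assms(1) that unfolding disjoint_family_on_def by blast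
    then show "g i x = f x"
      by (simp add: f_def)
  qed
  then show ?thesis
    using bij_betw_UNION_disjoint[OF assms(2)] bij_betw_imp_surj_on by blast
qed

section \<open>The triangulation\<close>

lemma successively_edge_rel_rtrancl:
  assumes "successively (\<lambda>x y. {x, y} \<in> L) xs" "x \<in> set xs" "y \<in> set xs"
  shows "(x, y) \<in> (edge_rel L)\<^sup>*"
  using assms
proof (induction xs arbitrary: x y rule: induct_list012)
  case (3 a b xs)
  have ab: "(a, b) \<in> (edge_rel L)\<^sup>*" "(b, a) \<in> (edge_rel L)\<^sup>*"
    using "3.prems"(1) by (auto simp: edge_rel_def insert_commute)
  have IH: "(u, w) \<in> (edge_rel L)\<^sup>*" if "u \<in> set (b # xs)" "w \<in> set (b # xs)" for u w
    using "3.IH"(2) "3.prems"(1) that by simp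
  show ?case
    using "3.prems"(2,3) IH[of b] IH[of _ b] ab by (auto intro: rtrancl_trans)
qed auto

lemma tri_edges_empty: "tri_edges {} = {}"
  by (simp add: tri_edges_def)

lemma tri_edges_insert: "tri_edges (insert t T) = {e. card e = 2 \<and> e \<subseteq> t} \<union> tri_edges T"
  by (auto simp: tri_edges_def)

lemma card_2_subsets_of_triangle:
  assumes "a \<noteq> b" "a \<noteq> c" "b \<noteq> c"
  shows "{e. card e = 2 \<and> e \<subseteq> {a, b, c}} = {{a, b}, {a, c}, {b, c}}"
proof -
  have "e = {a, b} \<or> e = {a, c} \<or> e = {b, c}" if "card e = 2" "e \<subseteq> {a, b, c}" for e
  proof -
    obtain x y where "e = {x, y}" "x \<noteq> y"
      using \<open>card e = 2\<close> card_2_iff by metis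
    then show ?thesis
      using \<open>e \<subseteq> {a, b, c}\<close> by auto
  qed
  then show ?thesis
    using assms by (auto simp: card_insert_if)
qed

lemma vertex_link_eq: "vertex_link T v = (\<lambda>t. t - {v}) ` (T \<inter> {t. v \<in> t})"
  by (auto simp: vertex_link_def)

definition V0 :: "nat set" where "V0 = {..<15}"

text \<open>
  K4 on 0, 1, 2, 3 with 4, 5, 6, 7 inserted into the faces 123, 023, 013, 012, and then
  8, ..., 14 into the faces 235, 234, 134, 124, 136, 036, 035.
\<close>

definition T0 :: "nat set set" where
  "T0 = {{0,2,5}, {0,1,6}, {0,1,7}, {0,2,7}, {1,2,7}, {2,3,8}, {2,5,8}, {3,5,8}, {2,3,9},
    {2,4,9}, {3,4,9}, {1,3,10}, {1,4,10}, {3,4,10}, {1,2,11}, {1,4,11}, {2,4,11}, {1,3,12},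
    {1,6,12}, {3,6,12}, {0,3,13}, {0,6,13}, {3,6,13}, {0,3,14}, {0,5,14}, {3,5,14}}"

lemma tri_edges_T0: "tri_edges T0 =
  {{0,1}, {0,2}, {0,3}, {0,5}, {0,6}, {0,7}, {0,13}, {0,14}, {1,2}, {1,3}, {1,4}, {1,6}, {1,7},
   {1,10}, {1,11}, {1,12}, {2,3}, {2,4}, {2,5}, {2,7}, {2,8}, {2,9}, {2,11}, {3,4}, {3,5}, {3,6},
   {3,8}, {3,9}, {3,10}, {3,12}, {3,13}, {3,14}, {4,9}, {4,10}, {4,11}, {5,8}, {5,14}, {6,12},
   {6,13}}"
  unfolding T0_def tri_edges_insert tri_edges_empty
  by (subst card_2_subsets_of_triangle, simp, simp, simp)+ (simp add: set_eq_subset)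

lemma T0_triangles: "\<forall>t\<in>T0. t \<subseteq> V0 \<and> card t = 3"
  unfolding T0_def V0_def by simp

definition link_cycle :: "nat \<Rightarrow> nat list" where
  "link_cycle v = [[2,5,14,3,13,6,1,7], [0,6,12,3,10,4,11,2,7], [0,5,8,3,9,4,11,1,7],
    [2,8,5,14,0,13,6,12,1,10,4,9], [2,9,3,10,1,11], [0,2,8,3,14], [0,1,12,3,13], [0,1,2],
    [2,3,5], [2,3,4], [1,3,4], [1,2,4], [1,3,6], [0,3,6], [0,3,5]] ! v"

definition spanning_walk :: "nat list" where
  "spanning_walk = [0,1,2,3,4,9,4,10,4,11,4,3,5,8,5,14,5,3,6,12,6,13,6,3,2,7,2,1,0]"

lemma link_cycle_T0:
  "\<forall>v\<in>V0. \<Union>(vertex_link T0 v) \<subseteq> set (link_cycle v) \<and>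
     successively (\<lambda>x y. {x, y} \<in> vertex_link T0 v) (link_cycle v)"
  unfolding V0_def vertex_link_eq
  by (simp add: lessThan_nat_numeral lessThan_Suc T0_def Int_insert_left insert_Diff_if
      link_cycle_def doubleton_eq_iff)

lemma T0_edge_in_two_faces: "\<forall>e\<in>tri_edges T0. card {t\<in>T0. e \<subseteq> t} = 2"
  unfolding Collect_conj_eq Collect_mem_eq tri_edges_T0
  by (simp add: T0_def Int_insert_left set_eq_subset)

lemma T0_connected: "\<forall>x\<in>V0. \<forall>y\<in>V0. (x, y) \<in> (edge_rel (tri_edges T0))\<^sup>*"
proof (intro ballI)
  fix x y assume "x \<in> V0" "y \<in> V0"
  moreover have "V0 \<subseteq> set spanning_walk"
    unfolding spanning_walk_def V0_def by (simp add: lessThan_nat_numeral lessThan_Suc)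
  moreover have walk: "successively (\<lambda>x y. {x, y} \<in> tri_edges T0) spanning_walk"
    unfolding tri_edges_T0 spanning_walk_def by (simp add: doubleton_eq_iff)
  ultimately show "(x, y) \<in> (edge_rel (tri_edges T0))\<^sup>*"
    by (intro successively_edge_rel_rtrancl[OF walk]) auto
qed

lemma T0_euler_characteristic: "int (card V0) - int (card (tri_edges T0)) + int (card T0) = 2"
proof -
  have "card (tri_edges T0) = 39"
    unfolding tri_edges_T0 by (simp add: set_eq_subset)
  moreover have "card T0 = 26"
    unfolding T0_def by (simp add: set_eq_subset)
  moreover have "card V0 = 15"
    by (simp add: V0_def)
  ultimately show ?thesis
    by simp
qed

lemma plane_triangulation_T0: "plane_triangulation V0 T0"
  unfolding plane_triangulation_def
proof (intro conjI)
  show "finite V0"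
    by (simp add: V0_def)
  have "0 \<in> V0"
    by (simp add: V0_def)
  then show "V0 \<noteq> {}"
    by blast
  show "\<forall>v\<in>V0. \<exists>t\<in>T0. v \<in> t"
    unfolding T0_def V0_def by (simp add: lessThan_nat_numeral lessThan_Suc)
  show "\<forall>v\<in>V0. \<forall>x\<in>\<Union>(vertex_link T0 v). \<forall>y\<in>\<Union>(vertex_link T0 v).
      (x, y) \<in> (edge_rel (vertex_link T0 v))\<^sup>*"
  proof (intro ballI)
    fix v x y assume "v \<in> V0" "x \<in> \<Union>(vertex_link T0 v)" "y \<in> \<Union>(vertex_link T0 v)"
    then show "(x, y) \<in> (edge_rel (vertex_link T0 v))\<^sup>*"
      using link_cycle_T0 by (intro successively_edge_rel_rtrancl[of _ "link_cycle v"]) auto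
  qed
qed (rule T0_triangles T0_edge_in_two_faces T0_connected T0_euler_characteristic)+

lemma residue_stacked_T0: "residue_stacked 4 V0 (tri_edges T0)"
  unfolding residue_stacked_def tri_edges_T0 V0_def
  by (simp add: lessThan_nat_numeral lessThan_Suc insert_Diff_if doubleton_eq_iff)

text \<open>
  T0 has eight faces missing residue class 3 and six missing each other class; two of the
  former are dropped.
\<close>

definition F0 :: "nat set set" where
  "F0 = T0 - {{0,5,14}, {0,6,13}}"

definition faces_avoiding :: "nat \<Rightarrow> nat set set" where
  "faces_avoiding c = {F \<in> F0. (\<lambda>v. v mod 4) ` F = {..<4} - {c}}"

lemma UN_faces_avoiding: "(\<Union>c<4. faces_avoiding c) = F0"
proof -
  have avoids: "\<forall>F\<in>T0. F \<notin> {{0,5,14}, {0,6,13}} \<longrightarrow>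
      (\<exists>c\<in>{..<4}. (\<lambda>v. v mod 4) ` F = {..<4} - {c})"
    unfolding T0_def by (simp add: lessThan_nat_numeral lessThan_Suc insert_Diff_if set_eq_subset)
  show ?thesis
  proof (intro equalityI subsetI)
    fix F assume "F \<in> (\<Union>c<4. faces_avoiding c)"
    then show "F \<in> F0"
      by (auto simp: faces_avoiding_def)
  next
    fix F assume "F \<in> F0"
    then show "F \<in> (\<Union>c<4. faces_avoiding c)"
      using avoids by (auto simp: faces_avoiding_def F0_def)
  qed
qed

lemma card_faces_avoiding:
  assumes "c < 4"
  shows "card (faces_avoiding c) = 6"
proof -
  from assms consider "c = 0" | "c = 1" | "c = 2" | "c = 3"
    by linarith
  then show ?thesis
    unfolding faces_avoiding_def F0_def T0_def Collect_conj_eq Collect_mem_eq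
    by cases (simp_all add: insert_Diff_if Int_insert_left lessThan_nat_numeral lessThan_Suc set_eq_subset)
qed

lemma F0_matching:
  obtains \<psi> where "bij_betw \<psi> F0 (permutations_of_set {1..4::nat})"
    and "\<And>c F. c < 4 \<Longrightarrow> F \<in> faces_avoiding c \<Longrightarrow> \<psi> F ! c = 4"
proof -
  define B where "B = (\<lambda>c. {p \<in> permutations_of_set {1..4::nat}. p ! c = 4})"
  have "disjoint_family_on faces_avoiding {..<4}"
    unfolding disjoint_family_on_def faces_avoiding_def by auto
  moreover have "disjoint_family_on B {..<4}"
    using disjoint_family_on_permutations_of_set_nth_eq[of "{1..4::nat}" 4] by (simp add: B_def)
  moreover have "finite (faces_avoiding c)" "finite (B c)" if "c \<in> {..<4}" for c
    by (auto simp: faces_avoiding_def F0_def T0_def B_def)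
  moreover have "card (faces_avoiding c) = card (B c)" if "c \<in> {..<4}" for c
    using card_faces_avoiding card_permutations_of_set_nth_eq[of "{1..4::nat}" 4 c] that
    by (simp add: B_def fact_numeral)
  ultimately have "\<exists>\<psi>. bij_betw \<psi> (\<Union>c<4. faces_avoiding c) (\<Union>c<4. B c) \<and>
      (\<forall>c\<in>{..<4}. \<psi> ` faces_avoiding c = B c)"
    by (rule bij_betw_disjoint_families)
  then obtain \<psi> where \<psi>: "bij_betw \<psi> (\<Union>c<4. faces_avoiding c) (\<Union>c<4. B c)"
      and faces: "\<forall>c\<in>{..<4}. \<psi> ` faces_avoiding c = B c"
    by blast
  show ?thesis
  proof (rule that)
    have "(\<Union>c<4. B c) = permutations_of_set {1..4}"
      using UN_permutations_of_set_nth_eq[of "{1..4::nat}" 4] by (simp add: B_def)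
    then show "bij_betw \<psi> F0 (permutations_of_set {1..4})"
      using \<psi> by (simp add: UN_faces_avoiding)
  next
    fix c F assume "c < 4" "F \<in> faces_avoiding c"
    then have "\<psi> F \<in> B c"
      using faces by blast
    then show "\<psi> F ! c = 4"
      by (simp add: B_def)
  qed
qed

lemma residue_colouring_image_faces_avoiding:
  assumes F: "F \<in> faces_avoiding c" and "c < 4"
    and p: "p \<in> permutations_of_set {1..4}" "p ! c = 4"
  shows "residue_colouring 4 V0 p ` F = {1, 2, 3}"
proof -
  have "F \<in> T0"
    using F by (simp add: faces_avoiding_def F0_def)
  then have "F \<subseteq> V0"
    using T0_triangles by blast
  moreover have "(\<lambda>v. v mod 4) ` F = {..<4} - {c}"
    using F by (simp add: faces_avoiding_def)
  ultimately have "residue_colouring 4 V0 p ` F = {1..4} - {p ! c}"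
    using image_residue_colouring[OF p(1)] \<open>c < 4\<close> by blast
  also have "\<dots> = {1, 2, 3}"
    using p(2) by auto
  finally show ?thesis .
qed

theorem lemma7:
  shows "\<exists>(V :: nat set) (T :: nat set set) (\<F> :: nat set set) (\<phi> :: nat set \<Rightarrow> nat \<Rightarrow> nat).
     plane_triangulation V T \<and>
     uniquely_colourable V (tri_edges T) 4 \<and>
     \<F> \<subseteq> T \<and> card \<F> = 24 \<and>
     bij_betw \<phi> \<F> (proper_colourings V (tri_edges T) 4) \<and>
     (\<forall>F\<in>\<F>. \<phi> F ` F = {1, 2, 3})"
proof -
  obtain \<psi> where \<psi>: "bij_betw \<psi> F0 (permutations_of_set {1..4::nat})"
    and \<psi>_avoiding: "\<And>c F. c < 4 \<Longrightarrow> F \<in> faces_avoiding c \<Longrightarrow> \<psi> F ! c = 4"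
    by (fact F0_matching)
  have faces: "(residue_colouring 4 V0 \<circ> \<psi>) F ` F = {1, 2, 3}" if "F \<in> F0" for F
  proof -
    have "F \<in> (\<Union>c<4. faces_avoiding c)"
      using that by (simp only: UN_faces_avoiding)
    then obtain c where c: "c < 4" "F \<in> faces_avoiding c"
      by blast
    then show ?thesis
      using residue_colouring_image_faces_avoiding[OF c(2,1) bij_betw_apply[OF \<psi> that]]
        \<psi>_avoiding[OF c] by simp
  qed
  show ?thesis
  proof (intro exI conjI)
    show "plane_triangulation V0 T0"
      by (rule plane_triangulation_T0)
    show "uniquely_colourable V0 (tri_edges T0) 4"
      by (rule uniquely_colourable_residue_stacked[OF residue_stacked_T0])
    show "F0 \<subseteq> T0"
      unfolding F0_def by blast
    show "card F0 = 24"
      using bij_betw_same_card[OF \<psi>] by (simp add: fact_numeral)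
    show "bij_betw (residue_colouring 4 V0 \<circ> \<psi>) F0 (proper_colourings V0 (tri_edges T0) 4)"
      by (rule bij_betw_trans[OF \<psi> bij_betw_residue_colouring[OF residue_stacked_T0]])
    show "\<forall>F\<in>F0. (residue_colouring 4 V0 \<circ> \<psi>) F ` F = {1, 2, 3}"
      using faces by blast
  qed
qed

end
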